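(* In the setting of the context, assume $\sup_{m\ge1,\,0\le i\le\pi_m-1}\eta_{m,i}<\infty$. Then for every $j\ge1$ the sequence $(P_j(\{r\}))_{r\ge0}$ converges to $0$ exponentially fast as $r\to\infty$.
   Context: Let $\pi_m\ge2$ ($m\ge1$) be integers and $\eta_{m,i}\ge0$ ($m\ge1$, $0\le i\le\pi_m-1$) integers. $\overline Y=\prod_{m\ge1}\{0,\dots,\pi_m-1\}$ with product uniform measure $\overline\nu$ and odometer $\overline S$ (add $1$ to the first coordinate with carry to the right). $\gamma(\overline y)=\sum_{m=1}^{\overline t(\overline y)}\eta_{m,\overline y_m}$ where $\overline t(\overline y)$ is the smallest $t\ge1$ with $\overline y_t<\pi_t-1$. $P_j$ is the distribution under $\overline\nu$ of $\gamma+\gamma\circ\overline S+\dots+\gamma\circ\overline S^{j-1}$ (a probability on $\{0,1,2,\dots\}$). *)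

theory Defs
  imports "HOL-Probability.Probability"
begin

text \<open>Coordinates are indexed from 0 (coordinate m here corresponds to m+1 in the paper).\<close>

definition odo_space :: "(nat \<Rightarrow> nat) \<Rightarrow> (nat \<Rightarrow> nat) measure" where
  "odo_space \<pi> = (\<Pi>\<^sub>M m\<in>UNIV. measure_pmf (pmf_of_set {..<\<pi> m}))"

definition odometer :: "(nat \<Rightarrow> nat) \<Rightarrow> (nat \<Rightarrow> nat) \<Rightarrow> (nat \<Rightarrow> nat)" where
  "odometer \<pi> y = (\<lambda>m. if (\<forall>k<m. y k = \<pi> k - 1)
                         then (if y m = \<pi> m - 1 then 0 else y m + 1) else y m)"

definition odo_t :: "(nat \<Rightarrow> nat) \<Rightarrow> (nat \<Rightarrow> nat) \<Rightarrow> nat" where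
  "odo_t \<pi> y = (LEAST t. y t < \<pi> t - 1)"

definition odo_gamma :: "(nat \<Rightarrow> nat) \<Rightarrow> (nat \<Rightarrow> nat \<Rightarrow> nat) \<Rightarrow> (nat \<Rightarrow> nat) \<Rightarrow> nat" where
  "odo_gamma \<pi> \<eta> y = (\<Sum>m\<le>odo_t \<pi> y. \<eta> m (y m))"

definition odo_P :: "(nat \<Rightarrow> nat) \<Rightarrow> (nat \<Rightarrow> nat \<Rightarrow> nat) \<Rightarrow> nat \<Rightarrow> nat \<Rightarrow> real" where
  "odo_P \<pi> \<eta> j r = measure (odo_space \<pi>)
     {y \<in> space (odo_space \<pi>). (\<Sum>k<j. odo_gamma \<pi> \<eta> ((odometer \<pi> ^^ k) y)) = r}"

end

theory Submission
  imports Defs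
begin

text \<open>If the first \<open>j\<close> values of \<open>\<gamma>\<close> along an orbit sum to more than \<open>j n B\<close>, then one of the
points \<open>S\<^sup>k y\<close>, \<open>k < j\<close>, has its first \<open>n\<close> digits maximal (otherwise \<open>t \<le> n\<close> and \<open>\<gamma> \<le> n B\<close>).
If \<open>S z\<close> has maximal digits at positions \<open>a, \<dots>, n - 1\<close>, then so does \<open>z\<close> at \<open>a + 1, \<dots>, n - 1\<close>
(a carry would reset digit \<open>a\<close> to \<open>0\<close>), so \<open>y\<close> itself has maximal digits at positions \<open>j, \<dots>, n - 1\<close>, an event
of probability at most \<open>2\<^sup>j\<^sup>-\<^sup>n\<close>. Taking \<open>n \<approx> r / (j B + 1)\<close> gives the geometric decay.\<close>

lemma space_odo_space [simp]: "space (odo_space \<pi>) = UNIV"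
  by (simp add: odo_space_def space_PiM)

lemma prob_space_odo_space: "prob_space (odo_space \<pi>)"
  unfolding odo_space_def by (intro prob_space_PiM) (simp add: prob_space_measure_pmf)

lemma AE_odo_digits:
  assumes "\<And>m. 0 < \<pi> m"
  shows "AE y in odo_space \<pi>. \<forall>m. y m < \<pi> m"
proof -
  interpret product_prob_space "\<lambda>m. measure_pmf (pmf_of_set {..<\<pi> m})" UNIV
    by unfold_locales
  have "AE y in odo_space \<pi>. y m < \<pi> m" for m
    unfolding odo_space_def using assms[of m]
    by (intro AE_component) (auto simp: AE_measure_pmf_iff lessThan_empty_iff)
  then show ?thesis by (simp add: AE_all_countable)
qed

lemma measure_odo_cylinder:
  assumes "finite I" and "\<And>m. m \<in> I \<Longrightarrow> c m < \<pi> m"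
  shows "measure (odo_space \<pi>) {y. \<forall>m\<in>I. y m = c m} = (\<Prod>m\<in>I. 1 / real (\<pi> m))"
proof -
  interpret product_prob_space "\<lambda>m. measure_pmf (pmf_of_set {..<\<pi> m})" UNIV
    by unfold_locales
  have "emeasure (odo_space \<pi>) {y. \<forall>m\<in>I. y m \<in> {c m}}
      = (\<Prod>m\<in>I. emeasure (measure_pmf (pmf_of_set {..<\<pi> m})) {c m})"
    using emeasure_PiM_Collect[of I "\<lambda>m. {c m}"] assms(1) by (simp add: odo_space_def space_PiM)
  also have "\<dots> = (\<Prod>m\<in>I. ennreal (1 / real (\<pi> m)))"
  proof (intro prod.cong refl)
    fix m assume "m \<in> I"
    then have "{..<\<pi> m} \<noteq> {}" "c m \<in> {..<\<pi> m}" using assms(2) by auto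
    then show "emeasure (measure_pmf (pmf_of_set {..<\<pi> m})) {c m} = ennreal (1 / real (\<pi> m))"
      by (simp add: emeasure_pmf_single)
  qed
  finally show ?thesis
    by (simp add: measure_def prod_ennreal prod_nonneg)
qed

lemma odometer_max_segment:
  assumes "\<And>m. 2 \<le> \<pi> m" and max: "\<forall>m\<in>{a..<n}. odometer \<pi> y m = \<pi> m - 1"
  shows "\<forall>m\<in>{Suc a..<n}. y m = \<pi> m - 1"
proof (rule ballI, rule ccontr)
  fix m assume m: "m \<in> {Suc a..<n}" and "y m \<noteq> \<pi> m - 1"
  define c where "c = (LEAST c. y c \<noteq> \<pi> c - 1)"
  have "c \<le> m" unfolding c_def by (rule Least_le) fact
  have below_c: "y k = \<pi> k - 1" if "k < c" for k
    using not_less_Least[of k "\<lambda>c. y c \<noteq> \<pi> c - 1"] that unfolding c_def by blast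
  show False
  proof (cases "a < c")
    case True
    then have "odometer \<pi> y a = 0" using below_c by (simp add: odometer_def)
    moreover have "odometer \<pi> y a = \<pi> a - 1" using max m by simp
    ultimately show False using assms(1)[of a] by simp
  next
    case False
    have "y c \<noteq> \<pi> c - 1"
      unfolding c_def by (rule LeastI[of "\<lambda>c. y c \<noteq> \<pi> c - 1" m]) fact
    moreover have "c < m" using False m by simp
    ultimately have "\<not> (\<forall>k<m. y k = \<pi> k - 1)" by blast
    then have "odometer \<pi> y m = y m" unfolding odometer_def by (simp only: if_False)
    with max m \<open>y m \<noteq> _\<close> show False by simp
  qed
qed

lemma odometer_iterate_max_segment:
  assumes "\<And>m. 2 \<le> \<pi> m" and "\<forall>m\<in>{a..<n}. (odometer \<pi> ^^ k) y m = \<pi> m - 1"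
  shows "\<forall>m\<in>{a + k..<n}. y m = \<pi> m - 1"
  using assms(2)
proof (induction k arbitrary: y)
  case (Suc k)
  then have "\<forall>m\<in>{a + k..<n}. odometer \<pi> y m = \<pi> m - 1"
    using Suc.IH[of "odometer \<pi> y"] Suc.prems unfolding funpow_Suc_right comp_def by blast
  then show ?case using odometer_max_segment[OF assms(1)] by simp
qed simp

lemma odometer_digits:
  assumes "\<forall>m. y m < \<pi> m"
  shows "\<forall>m. (odometer \<pi> ^^ k) y m < \<pi> m"
proof (induction k)
  case (Suc k)
  have "odometer \<pi> z m < \<pi> m" if "z m < \<pi> m" for z :: "nat \<Rightarrow> nat" and m
    using that by (simp add: odometer_def) arith
  with Suc show ?case by simp
qed (use assms in simp)

lemma odo_gamma_le:
  assumes B: "\<forall>m i. i < \<pi> m \<longrightarrow> \<eta> m i \<le> B" and z: "\<forall>m. z m < \<pi> m"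
    and "t < n" and "z t \<noteq> \<pi> t - 1"
  shows "odo_gamma \<pi> \<eta> z \<le> n * B"
proof -
  have "z t < \<pi> t - 1" using z assms(4) by (metis Suc_pred' less_Suc_eq not_gr_zero not_less0)
  then have "odo_t \<pi> z \<le> t" unfolding odo_t_def by (rule Least_le)
  have "odo_gamma \<pi> \<eta> z \<le> (\<Sum>m\<le>odo_t \<pi> z. B)"
    unfolding odo_gamma_def using B z by (intro sum_mono) auto
  also have "\<dots> = (odo_t \<pi> z + 1) * B" by simp
  also have "\<dots> \<le> n * B" using \<open>odo_t \<pi> z \<le> t\<close> \<open>t < n\<close> by (intro mult_right_mono) auto
  finally show ?thesis .
qed

lemma odometer_sum_large_imp_max:
  assumes "\<And>m. 2 \<le> \<pi> m" and B: "\<forall>m i. i < \<pi> m \<longrightarrow> \<eta> m i \<le> B"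
    and y: "\<forall>m. y m < \<pi> m"
    and large: "j * n * B < (\<Sum>k<j. odo_gamma \<pi> \<eta> ((odometer \<pi> ^^ k) y))"
  shows "\<forall>m\<in>{j..<n}. y m = \<pi> m - 1"
proof -
  have "\<exists>k<j. \<forall>t\<in>{0..<n}. (odometer \<pi> ^^ k) y t = \<pi> t - 1"
  proof (rule ccontr)
    assume "\<not> ?thesis"
    then have "(\<Sum>k<j. odo_gamma \<pi> \<eta> ((odometer \<pi> ^^ k) y)) \<le> (\<Sum>k<j. n * B)"
      using odo_gamma_le[OF B odometer_digits[OF y]] by (intro sum_mono) auto
    with large show False by (simp add: mult.assoc)
  qed
  then obtain k where "k < j" and max: "\<forall>t\<in>{0..<n}. (odometer \<pi> ^^ k) y t = \<pi> t - 1" by blast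
  show ?thesis using odometer_iterate_max_segment[OF assms(1) max] \<open>k < j\<close> by simp
qed

lemma odo_P_le_half_pow:
  assumes "\<And>m. 2 \<le> \<pi> m" and B: "\<forall>m i. i < \<pi> m \<longrightarrow> \<eta> m i \<le> B" and "j * n * B < r"
  shows "odo_P \<pi> \<eta> j r \<le> (1/2) ^ (n - j)"
proof -
  interpret prob_space "odo_space \<pi>" by (rule prob_space_odo_space)
  let ?cyl = "{y. \<forall>m\<in>{j..<n}. y m = \<pi> m - 1}"
  have pos: "\<And>m. 0 < \<pi> m" using assms(1) by (auto intro: less_le_trans[OF zero_less_numeral])
  have "AE y in odo_space \<pi>. (\<Sum>k<j. odo_gamma \<pi> \<eta> ((odometer \<pi> ^^ k) y)) = r \<longrightarrow> y \<in> ?cyl"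
    using AE_odo_digits[OF pos]
  proof eventually_elim
    case (elim y)
    then show ?case using odometer_sum_large_imp_max[OF assms(1) B, of y j n] assms(3) by auto
  qed
  moreover have "{y \<in> space (odo_space \<pi>). \<forall>m\<in>{j..<n}. y m = \<pi> m - 1} \<in> sets (odo_space \<pi>)"
    unfolding odo_space_def by measurable
  ultimately have "odo_P \<pi> \<eta> j r \<le> measure (odo_space \<pi>) ?cyl"
    unfolding odo_P_def by (intro finite_measure_mono_AE) auto
  also have "\<dots> = (\<Prod>m\<in>{j..<n}. 1 / real (\<pi> m))"
    using pos by (intro measure_odo_cylinder) auto
  also have "\<dots> \<le> (\<Prod>m\<in>{j..<n}. 1 / 2)"
    using assms(1) by (intro prod_mono) (auto simp: divide_simps)
  finally show ?thesis by simp
qed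

lemma odo_P_le_geometric:
  assumes "\<And>m. 2 \<le> \<pi> m" and B: "\<forall>m i. i < \<pi> m \<longrightarrow> \<eta> m i \<le> B"
    and "n * (j * B + 1) \<le> r"
  shows "odo_P \<pi> \<eta> j r \<le> 2 ^ j * (1/2) ^ n"
proof (cases "j * n * B < r")
  case True
  then have "odo_P \<pi> \<eta> j r \<le> (1/2) ^ (n - j)" by (rule odo_P_le_half_pow[OF assms(1) B])
  also have "\<dots> \<le> 2 ^ j * (1/2) ^ n"
    by (cases "j \<le> n") (auto simp: power_diff power_one_over field_simps)
  finally show ?thesis .
next
  case False
  with assms(3) have "n = 0" by (auto simp: algebra_simps)
  interpret prob_space "odo_space \<pi>" by (rule prob_space_odo_space)
  have "odo_P \<pi> \<eta> j r \<le> 1" unfolding odo_P_def by (rule prob_le_1)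
  with \<open>n = 0\<close> show ?thesis by (simp add: order_trans[OF _ one_le_power])
qed

theorem mainTheorem18:
  fixes \<pi> :: "nat \<Rightarrow> nat" and \<eta> :: "nat \<Rightarrow> nat \<Rightarrow> nat"
  assumes "\<And>m. \<pi> m \<ge> 2"
    and "\<exists>B. \<forall>m i. i < \<pi> m \<longrightarrow> \<eta> m i \<le> B"
    and "j \<ge> 1"
  shows "\<exists>C q. 0 < q \<and> q < 1 \<and> (\<forall>r. odo_P \<pi> \<eta> j r \<le> C * q ^ r)"
proof -
  obtain B where B: "\<forall>m i. i < \<pi> m \<longrightarrow> \<eta> m i \<le> B" using assms(2) by blast
  define D where "D = j * B + 1"
  define q :: real where "q = root D (1/2)"
  have "D > 0" by (simp add: D_def)
  then have "0 < q" "q < 1" and qD: "q ^ D = 1/2" by (simp_all add: q_def real_root_lt_1_iff)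
  have "odo_P \<pi> \<eta> j r \<le> 2 ^ (j + 1) * q ^ r" for r
  proof -
    have "r div D * D \<le> r" and "r < (r div D + 1) * D"
      using \<open>D > 0\<close> by (auto simp: dividend_less_div_times)
    then have "odo_P \<pi> \<eta> j r \<le> 2 ^ j * (1/2) ^ (r div D)"
      unfolding D_def by (intro odo_P_le_geometric[OF assms(1) B]) (simp add: mult.commute)
    also have "\<dots> = 2 ^ (j + 1) * (q ^ D) ^ (r div D + 1)" by (simp add: qD)
    also have "\<dots> = 2 ^ (j + 1) * q ^ ((r div D + 1) * D)" by (simp only: power_mult mult.commute)
    also have "\<dots> \<le> 2 ^ (j + 1) * q ^ r"
      using \<open>0 < q\<close> \<open>q < 1\<close> \<open>r < _\<close> by (intro mult_left_mono power_decreasing) auto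
    finally show ?thesis .
  qed
  with \<open>0 < q\<close> \<open>q < 1\<close> show ?thesis by blast
qed

end
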